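(* Let $X$ be a real normed space of dimension $n\ge1$. There is a least positive constant $C(X)$ such that $$\mathcal{H}(A,\operatorname{Co}(A))\le C(X)\,\sup_{t\in[0,1]}\mathcal{H}(tA+(1-t)A,A)$$ for every nonempty $A\subseteq X$, and this constant satisfies $$\log_2 n\le C(X)\le \kappa(n).$$ In particular $\log_2 n\le C(X)\le\lceil\log_2(n+1)\rceil\le \log_2 n+1$.
   Context: $d(x,A)=\inf\{\|x-a\|:a\in A\}$. The Hausdorff distance is $\mathcal{H}(A,B)=\sup\{d(x,B),d(y,A):x\in A,y\in B\}$; $\operatorname{Co}(A)$ is the convex hull. $\Delta_n=\{t\in\mathbb{R}^{n+1}: t_i\ge0,\sum t_i=1\}$ with vertices $e_1,\dots,e_{n+1}$. A function $f$ on a convex set $C$ is approximately convex if $f(tx+(1-t)y)\le tf(x)+(1-t)f(y)+1$ for all $x,y\in C$, $t\in[0,1]$. $\kappa(n)=\sup\{f(x): x\in\Delta_n,\ f:\Delta_n\to\mathbb{R}\text{ approximately convex with } f(e_i)\le0\ \forall i\}$. *)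

theory Defs
  imports "HOL-Analysis.Analysis"
begin

text \<open>Hausdorff distance, valued in the extended reals (it may be infinite).
  d(x,B) is infdist x B (the infimum of norms, for nonempty B).\<close>
definition haus :: "'a::real_normed_vector set \<Rightarrow> 'a set \<Rightarrow> ereal" where
  "haus A B = Sup ((\<lambda>x. ereal (infdist x B)) ` A \<union> (\<lambda>y. ereal (infdist y A)) ` B)"

definition mix :: "real \<Rightarrow> 'a::real_vector set \<Rightarrow> 'a set" where
  "mix t A = {t *\<^sub>R a + (1 - t) *\<^sub>R b | a b. a \<in> A \<and> b \<in> A}"

text \<open>Standard simplex Delta_n in R^(n+1), coordinates indexed by 0..n.\<close>
definition std_simplex :: "nat \<Rightarrow> (nat \<Rightarrow> real) set" where
  "std_simplex n = {x. (\<forall>i. 0 \<le> x i) \<and> (\<forall>i>n. x i = 0) \<and> (\<Sum>i\<le>n. x i) = 1}"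

definition vertex :: "nat \<Rightarrow> nat \<Rightarrow> real" where
  "vertex j = (\<lambda>i. if i = j then 1 else 0)"

definition approx_convex_on :: "(nat \<Rightarrow> real) set \<Rightarrow> ((nat \<Rightarrow> real) \<Rightarrow> real) \<Rightarrow> bool" where
  "approx_convex_on C f \<longleftrightarrow> (\<forall>x\<in>C. \<forall>y\<in>C. \<forall>t\<in>{0..1}.
      f (\<lambda>i. t * x i + (1 - t) * y i) \<le> t * f x + (1 - t) * f y + 1)"

definition kappa :: "nat \<Rightarrow> ereal" where
  "kappa n = Sup {ereal (f x) | f x. x \<in> std_simplex n \<and> approx_convex_on (std_simplex n) f
      \<and> (\<forall>j\<le>n. f (vertex j) \<le> 0)}"

definition hull_const_ok :: "'a::real_normed_vector itself \<Rightarrow> real \<Rightarrow> bool" where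
  "hull_const_ok _ C \<longleftrightarrow> (\<forall>A :: 'a set. A \<noteq> {} \<longrightarrow>
      haus A (convex hull A) \<le> ereal C * (SUP t\<in>{0..1}. haus (mix t A) A))"

end

theory Submission
  imports Defs
begin

text \<open>
  Upper bound: by Caratheodory every \<open>y \<in> Co(A)\<close> is \<open>\<Sum> c\<^sub>i a\<^sub>i\<close> with \<open>c \<in> \<Delta>\<^sub>n\<close> and
  \<open>a\<^sub>i \<in> A\<close>. If every point of every \<open>tA + (1 - t)A\<close> lies within \<open>D\<close> of \<open>A\<close>, then
  \<open>x \<mapsto> d(\<Sum> x\<^sub>i a\<^sub>i, A) / D\<close> is approximately convex on \<open>\<Delta>\<^sub>n\<close> and vanishes at the vertices,
  so \<open>d(y, A) \<le> \<kappa>(n) D\<close>. Splitting the support of a point of \<open>\<Delta>\<^sub>n\<close> into halves gives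
  \<open>\<kappa>(n) \<le> \<lceil>log\<^sub>2 (n + 1)\<rceil>\<close>.

  Lower bound: take independent \<open>b\<^sub>0, \<dots>, b\<^bsub>n-1\<^esub>\<close>, let \<open>u\<close> be an almost shortest vector of
  \<open>b\<^sub>0 + span {b\<^sub>1, \<dots>}\<close> and let \<open>A\<close> be the image of the epigraph of the entropy \<open>H\<close> on
  \<open>\<Delta>\<^bsub>n-1\<^esub>\<close> under \<open>(x, s) \<mapsto> \<lambda> \<Sum>\<^bsub>i\<ge>1\<^esub> x\<^sub>i b\<^sub>i + s u\<close>. As \<open>H\<close> is approximately
  convex, all mixtures \<open>tA + (1 - t)A\<close> stay within \<open>norm u\<close> of \<open>A\<close>; but for large \<open>\<lambda>\<close>
  the image of the barycentre, a point of \<open>Co(A)\<close>, is at distance about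
  \<open>log\<^sub>2 n \<cdot> d(b\<^sub>0, span {b\<^sub>1, \<dots>})\<close> from \<open>A\<close>, since points of low entropy are far from the
  barycentre and points of high entropy are lifted high along \<open>u\<close>.

  Admissible constants are at least \<open>1\<close> (test \<open>A = {0, w}\<close>) and closed under infima,
  so the least one exists.
\<close>

section \<open>Finite-dimensional subspaces of a normed space\<close>

lemma abs_mult_infdist_span_le_norm:
  fixes w :: "'a::real_normed_vector"
  assumes "y - s *\<^sub>R w \<in> span S"
  shows "\<bar>s\<bar> * infdist w (span S) \<le> norm y"
proof (cases "s = 0")
  case False
  have "- inverse s *\<^sub>R (y - s *\<^sub>R w) \<in> span S"
    using assms by (rule span_mul)
  then have "infdist w (span S) \<le> dist w (- inverse s *\<^sub>R (y - s *\<^sub>R w))"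
    by (rule infdist_le)
  also have "\<dots> = norm y / \<bar>s\<bar>"
    using False by (simp add: dist_norm algebra_simps divide_inverse_commute)
  finally show ?thesis
    using False by (simp add: field_simps)
qed simp

lemma Cauchy_dominated:
  fixes s :: "nat \<Rightarrow> 'a::metric_space" and x :: "nat \<Rightarrow> 'b::metric_space"
  assumes "Cauchy x" "0 < c" "\<And>j k. c * dist (s j) (s k) \<le> dist (x j) (x k)"
  shows "Cauchy s"
proof (rule metric_CauchyI)
  fix e :: real assume "e > 0"
  then have "c * e > 0" using \<open>0 < c\<close> by simp
  then obtain M where M: "\<forall>j\<ge>M. \<forall>k\<ge>M. dist (x j) (x k) < c * e"
    using metric_CauchyD[OF \<open>Cauchy x\<close>] by blast
  have "dist (s j) (s k) < e" if "j \<ge> M" "k \<ge> M" for j k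
    using assms(3)[of j k] M that \<open>0 < c\<close> by (meson le_less_trans mult_less_cancel_left_pos)
  then show "\<exists>M. \<forall>j\<ge>M. \<forall>k\<ge>M. dist (s j) (s k) < e" by blast
qed

lemma closed_span_finite:
  fixes S :: "'a::real_normed_vector set"
  assumes "finite S"
  shows "closed (span S)"
  using assms
proof (induction S rule: finite_induct)
  case (insert w S)
  show ?case
  proof (cases "w \<in> span S")
    case True
    then show ?thesis using insert.IH by (simp add: span_redundant)
  next
    case False
    define d where "d = infdist w (span S)"
    have "d > 0"
      unfolding d_def using infdist_pos_not_in_closed[OF insert.IH _ False] span_zero by blast
    show ?thesis
      unfolding closed_sequential_limits
    proof (intro allI impI, elim conjE)
      fix x l assume "\<forall>k. x k \<in> span (insert w S)" and "x \<longlonglongrightarrow> l"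
      then have "\<forall>k. \<exists>c. x k - c *\<^sub>R w \<in> span S"
        by (simp add: span_insert)
      then obtain s where s: "\<And>k. x k - s k *\<^sub>R w \<in> span S"
        by metis
      have "d * dist (s j) (s k) \<le> dist (x j) (x k)" for j k
      proof -
        have "(x j - x k) - (s j - s k) *\<^sub>R w = (x j - s j *\<^sub>R w) - (x k - s k *\<^sub>R w)"
          by (simp add: algebra_simps)
        also have "\<dots> \<in> span S" using s by (simp add: span_diff)
        finally have "\<bar>s j - s k\<bar> * d \<le> norm (x j - x k)"
          unfolding d_def by (rule abs_mult_infdist_span_le_norm)
        then show ?thesis by (simp add: dist_norm dist_real_def mult.commute)
      qed
      then have "Cauchy s"
        using Cauchy_dominated[OF LIMSEQ_imp_Cauchy[OF \<open>x \<longlonglongrightarrow> l\<close>] \<open>d > 0\<close>] by blast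
      then obtain \<sigma> where "s \<longlonglongrightarrow> \<sigma>"
        using Cauchy_convergent_iff convergent_def by blast
      then have "(\<lambda>k. x k - s k *\<^sub>R w) \<longlonglongrightarrow> l - \<sigma> *\<^sub>R w"
        using \<open>x \<longlonglongrightarrow> l\<close> by (intro tendsto_intros)
      with insert.IH s have "l - \<sigma> *\<^sub>R w \<in> span S"
        by (rule closed_sequentially)
      then show "l \<in> span (insert w S)"
        by (auto simp: span_insert)
    qed
  qed
qed simp

lemma infdist_span_pos:
  fixes w :: "'a::real_normed_vector"
  assumes "finite S" "w \<notin> span S"
  shows "0 < infdist w (span S)"
  using infdist_pos_not_in_closed[OF closed_span_finite[OF assms(1)] _ assms(2)] span_zero
  by blast

lemma independent_not_in_span_rest:
  assumes "inj_on b I" "independent (b ` I)" "j \<in> I"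
  shows "b j \<notin> span (b ` (I - {j}))"
proof -
  have "b ` (I - {j}) = b ` I - {b j}"
    using assms(1,3) by (auto simp: inj_on_def)
  then show ?thesis using assms(2,3) unfolding dependent_def by auto
qed

lemma infdist_less_imp_ex:
  assumes "A \<noteq> {}" "infdist x A < r"
  shows "\<exists>a\<in>A. dist x a < r"
  using assms by (auto simp: infdist_notempty cINF_less_iff)

lemma independent_coeff_bound:
  fixes b :: "'i \<Rightarrow> 'a::real_normed_vector"
  assumes "finite I" "inj_on b I" "independent (b ` I)"
  obtains \<mu> where "\<mu> > 0" "\<And>c j. j \<in> I \<Longrightarrow> \<bar>c j\<bar> * \<mu> \<le> norm (\<Sum>i\<in>I. c i *\<^sub>R b i)"
proof -
  define d where "d j = infdist (b j) (span (b ` (I - {j})))" for j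
  have d_pos: "d j > 0" if "j \<in> I" for j
    unfolding d_def using assms(1) independent_not_in_span_rest[OF assms(2,3) that]
    by (intro infdist_span_pos) auto
  have d_le: "\<bar>c j\<bar> * d j \<le> norm (\<Sum>i\<in>I. c i *\<^sub>R b i)" if "j \<in> I" for c j
  proof -
    have "(\<Sum>i\<in>I. c i *\<^sub>R b i) - c j *\<^sub>R b j = (\<Sum>i\<in>I - {j}. c i *\<^sub>R b i)"
      using assms(1) that by (simp add: sum_diff1)
    also have "\<dots> \<in> span (b ` (I - {j}))"
      by (intro span_sum span_scale span_base) auto
    finally show ?thesis
      unfolding d_def by (rule abs_mult_infdist_span_le_norm)
  qed
  show ?thesis
  proof (cases "I = {}")
    case True
    then show ?thesis using that[of 1] by simp
  next
    case False
    have "Min (d ` I) > 0" "Min (d ` I) \<le> d j" if "j \<in> I" for j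
      using False assms(1) d_pos that by auto
    then show ?thesis
      using that[of "Min (d ` I)"] d_le False
      by (meson abs_ge_zero mult_left_mono order_trans ex_in_conv)
  qed
qed

lemma coset_near_min_norm:
  fixes w :: "'a::real_normed_vector"
  assumes "finite F" "w \<notin> span F" "0 < \<epsilon>"
  obtains u where "u - w \<in> span F" "norm u < (1 + \<epsilon>) * infdist w (span F)"
proof -
  have "infdist w (span F) < (1 + \<epsilon>) * infdist w (span F)"
    using infdist_span_pos[OF assms(1,2)] \<open>0 < \<epsilon>\<close> by simp
  then obtain h where "h \<in> span F" "dist w h < (1 + \<epsilon>) * infdist w (span F)"
    using infdist_less_imp_ex[of "span F"] span_zero by blast
  moreover have "(w - h) - w \<in> span F"
    using \<open>h \<in> span F\<close> span_neg by fastforce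
  ultimately show ?thesis using that[of "w - h"] by (simp add: dist_norm)
qed

section \<open>Hausdorff distance to mixtures and admissible constants\<close>

definition mix_dist :: "'a::real_normed_vector set \<Rightarrow> ereal" where
  "mix_dist A = (SUP t\<in>{0..1}. haus (mix t A) A)"

lemma hull_const_ok_iff:
  "hull_const_ok TYPE('a::real_normed_vector) C \<longleftrightarrow>
    (\<forall>A :: 'a set. A \<noteq> {} \<longrightarrow> haus A (convex hull A) \<le> ereal C * mix_dist A)"
  by (simp add: hull_const_ok_def mix_dist_def)

lemma haus_ge_infdist_left: "x \<in> A \<Longrightarrow> ereal (infdist x B) \<le> haus A B"
  unfolding haus_def by (intro Sup_upper) auto

lemma haus_ge_infdist_right: "y \<in> B \<Longrightarrow> ereal (infdist y A) \<le> haus A B"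
  unfolding haus_def by (intro Sup_upper) auto

lemma haus_leI:
  assumes "\<And>x. x \<in> A \<Longrightarrow> infdist x B \<le> r" "\<And>y. y \<in> B \<Longrightarrow> infdist y A \<le> r"
  shows "haus A B \<le> ereal r"
  unfolding haus_def using assms by (intro Sup_least) auto

lemma subset_mix: "A \<subseteq> mix t A"
proof
  fix a assume "a \<in> A"
  moreover have "a = t *\<^sub>R a + (1 - t) *\<^sub>R a" by (simp add: algebra_simps)
  ultimately show "a \<in> mix t A" unfolding mix_def by blast
qed

lemma infdist_le_mix_dist:
  assumes "t \<in> {0..1}" "z \<in> mix t A"
  shows "ereal (infdist z A) \<le> mix_dist A"
proof -
  have "ereal (infdist z A) \<le> haus (mix t A) A" using assms(2) by (rule haus_ge_infdist_left)
  also have "\<dots> \<le> mix_dist A" unfolding mix_dist_def using assms(1) by (rule SUP_upper)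
  finally show ?thesis .
qed

lemma mix_dist_nonneg:
  assumes "A \<noteq> {}"
  shows "0 \<le> mix_dist A"
proof -
  obtain a where "a \<in> A" using assms by blast
  then have "ereal (infdist a A) \<le> mix_dist A"
    using subset_mix[of A 0] by (intro infdist_le_mix_dist[of 0]) auto
  then show ?thesis using \<open>a \<in> A\<close> by (simp add: zero_ereal_def)
qed

lemma mix_dist_le:
  assumes "0 \<le> r" "\<And>t z. t \<in> {0..1} \<Longrightarrow> z \<in> mix t A \<Longrightarrow> infdist z A \<le> r"
  shows "mix_dist A \<le> ereal r"
  unfolding mix_dist_def
proof (intro SUP_least haus_leI)
  fix t :: real and y assume "y \<in> A"
  then have "y \<in> mix t A" using subset_mix by blast
  then show "infdist y (mix t A) \<le> r" using assms(1) by simp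
qed (use assms(2) in auto)

lemma infdist_convex_hull_le:
  fixes A :: "'a::real_normed_vector set"
  assumes "hull_const_ok TYPE('a) C" "0 \<le> C" "A \<noteq> {}" "x \<in> convex hull A"
    and "mix_dist A \<le> ereal r"
  shows "infdist x A \<le> C * r"
proof -
  have "ereal (infdist x A) \<le> haus A (convex hull A)"
    using assms(4) by (rule haus_ge_infdist_right)
  also have "\<dots> \<le> ereal C * mix_dist A"
    using assms(1,3) by (simp add: hull_const_ok_iff)
  also have "\<dots> \<le> ereal C * ereal r"
    using assms(2,5) by (intro ereal_mult_left_mono) auto
  finally show ?thesis by simp
qed

lemma hull_const_okI:
  fixes C :: real
  assumes "0 < C"
    and "\<And>(A :: 'a::real_normed_vector set) d y. A \<noteq> {} \<Longrightarrow> mix_dist A = ereal d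
          \<Longrightarrow> y \<in> convex hull A \<Longrightarrow> infdist y A \<le> C * d"
  shows "hull_const_ok TYPE('a) C"
  unfolding hull_const_ok_iff
proof (intro allI impI)
  fix A :: "'a set" assume "A \<noteq> {}"
  show "haus A (convex hull A) \<le> ereal C * mix_dist A"
  proof (cases "mix_dist A")
    case (real d)
    then have "0 \<le> d" using mix_dist_nonneg[OF \<open>A \<noteq> {}\<close>] by simp
    have "haus A (convex hull A) \<le> ereal (C * d)"
    proof (rule haus_leI)
      fix x assume "x \<in> A"
      then show "infdist x (convex hull A) \<le> C * d"
        using \<open>0 < C\<close> \<open>0 \<le> d\<close> by (simp add: hull_inc)
    qed (use assms(2) \<open>A \<noteq> {}\<close> real in blast)
    then show ?thesis using real by simp
  qed (use \<open>0 < C\<close> mix_dist_nonneg[OF \<open>A \<noteq> {}\<close>] in auto)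
qed

lemma hull_const_ok_Inf:
  fixes S :: "real set"
  assumes "S \<noteq> {}" "\<And>C. C \<in> S \<Longrightarrow> hull_const_ok TYPE('a::real_normed_vector) C"
    and "\<And>C. C \<in> S \<Longrightarrow> c \<le> C" "0 < c"
  shows "hull_const_ok TYPE('a) (Inf S)"
  unfolding hull_const_ok_iff
proof (intro allI impI)
  fix A :: "'a set" assume "A \<noteq> {}"
  have "c \<le> Inf S" using assms(1,3) by (rule cInf_greatest)
  have le_S: "haus A (convex hull A) \<le> ereal C * mix_dist A" if "C \<in> S" for C
    using assms(2)[OF that] \<open>A \<noteq> {}\<close> by (simp add: hull_const_ok_iff)
  show "haus A (convex hull A) \<le> ereal (Inf S) * mix_dist A"
  proof (cases "mix_dist A")
    case (real d)
    then have "0 \<le> d" using mix_dist_nonneg[OF \<open>A \<noteq> {}\<close>] by simp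
    show ?thesis
    proof (cases "haus A (convex hull A)")
      case (real h)
      have h_le: "h \<le> C * d" if "C \<in> S" for C
        using le_S[OF that] \<open>haus A (convex hull A) = ereal h\<close> \<open>mix_dist A = ereal d\<close> by simp
      have "h \<le> Inf S * d"
      proof (cases "d = 0")
        case True
        then show ?thesis using h_le assms(1) by auto
      next
        case False
        then have "h / d \<le> Inf S"
          using \<open>0 \<le> d\<close> h_le assms(1) by (intro cInf_greatest) (auto simp: divide_le_eq)
        then show ?thesis using False \<open>0 \<le> d\<close> by (simp add: divide_le_eq)
      qed
      then show ?thesis using \<open>haus A (convex hull A) = ereal h\<close> \<open>mix_dist A = ereal d\<close> by simp
    next
      case PInf
      then show ?thesis using le_S assms(1) \<open>mix_dist A = ereal d\<close> by fastforce
    qed simp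
  qed (use \<open>c \<le> Inf S\<close> \<open>0 < c\<close> mix_dist_nonneg[OF \<open>A \<noteq> {}\<close>] in auto)
qed

lemma infdist_scaleR_ends:
  fixes w :: "'a::real_normed_vector"
  assumes "0 \<le> r" "r \<le> 1"
  shows "infdist (r *\<^sub>R w) {0, w} = min r (1 - r) * norm w"
proof -
  have "w - r *\<^sub>R w = (1 - r) *\<^sub>R w" by (simp add: algebra_simps)
  then have "dist (r *\<^sub>R w) w = (1 - r) * norm w"
    using assms by (simp add: dist_norm norm_minus_commute[of "r *\<^sub>R w"])
  moreover have "{0, w} = {0} \<union> {w}" by auto
  then have "infdist (r *\<^sub>R w) {0, w} = min (infdist (r *\<^sub>R w) {0}) (infdist (r *\<^sub>R w) {w})"
    by (simp only:) (rule infdist_Un_min, auto)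
  ultimately show ?thesis
    using assms by (simp add: min_mult_distrib_right)
qed

lemma hull_const_ge_1:
  fixes w :: "'a::real_normed_vector"
  assumes "hull_const_ok TYPE('a) C" "0 \<le> C" "w \<noteq> 0"
  shows "1 \<le> C"
proof -
  have half: "min r (1 - r) * norm w \<le> norm w / 2" for r :: real
  proof -
    have "min r (1 - r) * norm w \<le> (1/2) * norm w"
      by (intro mult_right_mono) (auto simp: min_def)
    then show ?thesis by simp
  qed
  have mix_le: "mix_dist {0, w} \<le> ereal (norm w / 2)"
  proof (rule mix_dist_le)
    fix t z assume t: "t \<in> {0..1}" and "z \<in> mix t {0, w}"
    then have "z \<in> {0, w, t *\<^sub>R w, (1 - t) *\<^sub>R w}"
      by (auto simp: mix_def algebra_simps)
    then show "infdist z {0, w} \<le> norm w / 2"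
      using t half[of t] half[of "1 - t"] by (auto simp: infdist_scaleR_ends)
  qed simp
  have "(1/2) *\<^sub>R 0 + (1/2) *\<^sub>R w \<in> convex hull {0, w}"
    by (intro convexD[OF convex_convex_hull]) (auto simp: hull_inc)
  then have "infdist ((1/2) *\<^sub>R w) {0, w} \<le> C * (norm w / 2)"
    using infdist_convex_hull_le[OF assms(1,2) _ _ mix_le] by simp
  then show ?thesis using assms(3) by (simp add: infdist_scaleR_ends field_simps)
qed

section \<open>Approximately convex functions on the simplex\<close>

lemma vertex_in_std_simplex: "j \<le> n \<Longrightarrow> vertex j \<in> std_simplex n"
  by (simp add: std_simplex_def vertex_def)

lemma sum_vertex_scaleR:
  fixes a :: "nat \<Rightarrow> 'a::real_vector"
  assumes "j \<le> n"
  shows "(\<Sum>i\<le>n. vertex j i *\<^sub>R a i) = a j"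
proof -
  have "(\<Sum>i\<le>n. vertex j i *\<^sub>R a i) = (\<Sum>i\<le>n. if i = j then a i else 0)"
    by (intro sum.cong) (auto simp: vertex_def)
  then show ?thesis using assms by simp
qed

definition coord_support :: "nat \<Rightarrow> (nat \<Rightarrow> real) \<Rightarrow> nat set" where
  "coord_support n x = {i. i \<le> n \<and> x i \<noteq> 0}"

lemma finite_coord_support [simp]: "finite (coord_support n x)"
  by (simp add: coord_support_def)

lemma sum_coord_support:
  "(\<Sum>i\<le>n. x i) = (\<Sum>i\<in>coord_support n x. x i)"
  unfolding coord_support_def by (intro sum.mono_neutral_right) auto

lemma std_simplex_combination:
  assumes "x \<in> std_simplex n" "y \<in> std_simplex n" "t \<in> {0..1}"
  shows "(\<lambda>i. t * x i + (1 - t) * y i) \<in> std_simplex n"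
  using assms by (simp add: std_simplex_def sum.distrib flip: sum_distrib_left)

lemma std_simplex_eq_vertex:
  assumes "x \<in> std_simplex n" "card (coord_support n x) \<le> 1"
  obtains j where "j \<le> n" "x = vertex j"
proof -
  have "(\<Sum>i\<in>coord_support n x. x i) = 1"
    using assms(1) by (simp add: std_simplex_def flip: sum_coord_support)
  then have "coord_support n x \<noteq> {}" by auto
  then have "card (coord_support n x) = 1"
    using assms(2) by (simp add: le_antisym Suc_leI card_gt_0_iff)
  then obtain j where j: "coord_support n x = {j}"
    by (rule card_1_singletonE)
  then have "j \<le> n" "x j = 1"
    using \<open>(\<Sum>i\<in>coord_support n x. x i) = 1\<close> by (auto simp: coord_support_def)
  moreover have "x = vertex j"
  proof
    fix i show "x i = vertex j i"
      using assms(1) j \<open>x j = 1\<close> unfolding std_simplex_def coord_support_def vertex_def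
      by (cases "i \<le> n") (auto simp: set_eq_iff)
  qed
  ultimately show ?thesis using that by blast
qed

lemma std_simplex_restrict:
  assumes x: "x \<in> std_simplex n" and U: "U \<subseteq> coord_support n x" "U \<noteq> {}"
  defines "y \<equiv> \<lambda>i. if i \<in> U then x i / sum x U else 0"
  shows "0 < sum x U" "y \<in> std_simplex n" "coord_support n y \<subseteq> U"
proof -
  have "finite U" using U(1) by (rule finite_subset) simp
  moreover have "0 < x i" if "i \<in> U" for i
    using that U(1) x by (auto simp: std_simplex_def coord_support_def order_less_le)
  ultimately show pos: "0 < sum x U" using U(2) by (intro sum_pos)
  have "(\<Sum>i\<le>n. y i) = (\<Sum>i\<in>U. y i)"
    using U(1) by (intro sum.mono_neutral_right) (auto simp: y_def coord_support_def)
  also have "\<dots> = 1"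
    using pos by (simp add: y_def flip: sum_divide_distrib)
  finally show "y \<in> std_simplex n"
    using x U(1) pos by (auto simp: y_def std_simplex_def coord_support_def)
  show "coord_support n y \<subseteq> U"
    by (auto simp: y_def coord_support_def)
qed

lemma std_simplex_split:
  assumes x: "x \<in> std_simplex n"
    and T: "T \<subseteq> coord_support n x" "T \<noteq> {}" "coord_support n x - T \<noteq> {}"
  obtains a y z where "0 < a" "a < 1" "y \<in> std_simplex n" "z \<in> std_simplex n"
    "coord_support n y \<subseteq> T" "coord_support n z \<subseteq> coord_support n x - T"
    "x = (\<lambda>i. a * y i + (1 - a) * z i)"
proof -
  define S where "S = coord_support n x"
  define a where "a = sum x T"
  have "sum x S = 1"
    using x by (simp add: S_def std_simplex_def flip: sum_coord_support)
  then have sum_rest: "sum x (S - T) = 1 - a"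
    using T(1) by (simp add: S_def a_def sum_diff)
  note y = std_simplex_restrict[OF x T(1,2), folded a_def]
  note z = std_simplex_restrict[OF x _ T(3), folded S_def, unfolded sum_rest]
  have "x i = a * (if i \<in> T then x i / a else 0) + (1 - a) * (if i \<in> S - T then x i / (1 - a) else 0)"
    for i
  proof -
    have "x i = 0" if "i \<notin> S"
      using that x by (cases "i \<le> n") (auto simp: S_def coord_support_def std_simplex_def)
    then show ?thesis using y(1) z(1) T(1) by (auto simp: S_def)
  qed
  then have "x = (\<lambda>i. a * (if i \<in> T then x i / a else 0)
                  + (1 - a) * (if i \<in> S - T then x i / (1 - a) else 0))" ..
  with y z show ?thesis
    by (intro that[of a]) (auto simp: S_def)
qed

lemma approx_convex_le_log_card_support:
  assumes f: "approx_convex_on (std_simplex n) f" "\<And>j. j \<le> n \<Longrightarrow> f (vertex j) \<le> 0"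
    and "x \<in> std_simplex n" "card (coord_support n x) \<le> 2 ^ k"
  shows "f x \<le> k"
  using assms(3,4)
proof (induction k arbitrary: x)
  case 0
  then obtain j where "j \<le> n" "x = vertex j"
    by (auto elim: std_simplex_eq_vertex)
  then show ?case using f(2) by simp
next
  case (Suc k)
  \<comment> \<open>split the support into halves of size at most \<open>2 ^ k\<close> each\<close>
  show ?case
  proof (cases "card (coord_support n x) \<le> 2 ^ k")
    case True
    then show ?thesis using Suc by force
  next
    case False
    then obtain T where T: "T \<subseteq> coord_support n x" "card T = 2 ^ k"
      by (meson nat_le_linear obtain_subset_with_card_n)
    then have "T \<noteq> {}" "coord_support n x - T \<noteq> {}"
      using False by (auto simp: card_gt_0_iff)
    then obtain a y z where a: "0 < a" "a < 1" and yz: "y \<in> std_simplex n" "z \<in> std_simplex n"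
      "coord_support n y \<subseteq> T" "coord_support n z \<subseteq> coord_support n x - T"
      and x_eq: "x = (\<lambda>i. a * y i + (1 - a) * z i)"
      using std_simplex_split[OF Suc.prems(1) T(1)] by blast
    have "finite T" using T(1) by (rule finite_subset) simp
    then have "card (coord_support n y) \<le> 2 ^ k"
      using card_mono[OF _ yz(3)] T(2) by simp
    then have "f y \<le> k" using Suc.IH yz(1) by blast
    have "card (coord_support n z) \<le> card (coord_support n x - T)"
      using yz(4) by (simp add: card_mono)
    also have "\<dots> \<le> 2 ^ k"
      using Suc.prems(2) T by (simp add: card_Diff_subset finite_subset)
    finally have "f z \<le> k" using Suc.IH yz(2) by blast
    have "f x \<le> a * f y + (1 - a) * f z + 1"
      using f(1) yz(1,2) a unfolding approx_convex_on_def x_eq by simp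
    also have "\<dots> \<le> a * k + (1 - a) * k + 1"
      using \<open>f y \<le> k\<close> \<open>f z \<le> k\<close> a by (intro add_mono mult_left_mono) auto
    finally show ?thesis by (simp add: algebra_simps)
  qed
qed

lemma kappa_le_ceiling_log: "kappa n \<le> ereal (real_of_int \<lceil>log 2 (real n + 1)\<rceil>)"
  unfolding kappa_def
proof (intro Sup_least, clarify)
  fix f x assume x: "x \<in> std_simplex n" and f: "approx_convex_on (std_simplex n) f"
    and vertex_le: "\<forall>j\<le>n. f (vertex j) \<le> 0"
  define k where "k = nat \<lceil>log 2 (real n + 1)\<rceil>"
  have k: "real k = real_of_int \<lceil>log 2 (real n + 1)\<rceil>"
    unfolding k_def by simp
  have "card (coord_support n x) \<le> card {..n}"
    by (intro card_mono) (auto simp: coord_support_def)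
  also have "\<dots> \<le> 2 ^ k"
  proof -
    have "log 2 (real n + 1) \<le> real k"
      using k by linarith
    then have "real (Suc n) \<le> real (2 ^ k)"
      by (simp add: log_le_iff powr_realpow)
    then show ?thesis by (simp only: of_nat_le_iff card_atMost)
  qed
  finally have "f x \<le> k"
    using approx_convex_le_log_card_support[OF f _ x] vertex_le by blast
  then show "ereal (f x) \<le> ereal (real_of_int \<lceil>log 2 (real n + 1)\<rceil>)"
    using k by simp
qed

lemma kappa_ge_1:
  assumes "n \<ge> 1"
  shows "1 \<le> kappa n"
proof -
  define f where "f x = (if \<exists>j\<le>n. x = vertex j then 0 else 1 :: real)" for x
  define x where "x = (\<lambda>i::nat. if i \<le> 1 then 1/2 else 0 :: real)"
  have "x \<in> std_simplex n"
  proof -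
    have "(\<Sum>i\<le>n. x i) = (\<Sum>i\<le>1. x i)"
      using assms unfolding x_def by (intro sum.mono_neutral_right) auto
    then show ?thesis using assms by (auto simp: std_simplex_def x_def)
  qed
  moreover have "f x = 1"
    unfolding f_def x_def vertex_def by (auto dest!: fun_cong[where x = 0] split: if_splits)
  moreover have "approx_convex_on (std_simplex n) f"
    unfolding approx_convex_on_def f_def by auto
  moreover have "\<forall>j\<le>n. f (vertex j) \<le> 0"
    unfolding f_def by auto
  ultimately have "ereal (f x) \<le> kappa n"
    unfolding kappa_def by (intro Sup_upper) blast
  then show ?thesis using \<open>f x = 1\<close> by (simp add: one_ereal_def)
qed

lemma ceiling_log2_Suc_le:
  assumes "n \<ge> 1"
  shows "real_of_int \<lceil>log 2 (real n + 1)\<rceil> \<le> log 2 (real n) + 1"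
proof -
  define j where "j = \<lfloor>log 2 (real n)\<rfloor>"
  have "0 \<le> j" using assms by (simp add: j_def)
  have pow: "2 powr (j + 1) = real (2 ^ nat (j + 1))"
    using \<open>0 \<le> j\<close> by (simp add: powr_realpow[symmetric])
  have "real n < 2 powr (j + 1)"
    using assms by (simp add: j_def flip: log_less_iff)
  then have "n < 2 ^ nat (j + 1)"
    unfolding pow by linarith
  then have "real n + 1 \<le> 2 powr (j + 1)"
    unfolding pow by linarith
  then have "\<lceil>log 2 (real n + 1)\<rceil> \<le> j + 1"
    by (simp add: ceiling_le_iff log_le_iff)
  moreover have "j \<le> log 2 (real n)" by (simp add: j_def)
  ultimately show ?thesis by linarith
qed

section \<open>Caratheodory's theorem in a finite-dimensional space\<close>

lemma affine_dependent_card_gt_dim: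
  fixes S :: "'a::real_vector set"
  assumes "dim (UNIV :: 'a set) = n" "n \<ge> 1" "finite S" "n + 1 < card S"
  shows "affine_dependent S"
proof (rule ccontr)
  assume indep: "\<not> affine_dependent S"
  obtain a where "a \<in> S" using assms(4) by fastforce
  obtain B :: "'a set" where B: "independent B" "UNIV \<subseteq> span B" "card B = n"
    using basis_exists[of "UNIV :: 'a set"] assms(1) by auto
  have "finite B" using B(3) assms(2) by (metis card.infinite not_one_le_zero)
  moreover have "independent ((\<lambda>x. - a + x) ` (S - {a}))"
    using indep affine_dependent_iff_dependent2[OF \<open>a \<in> S\<close>] by simp
  moreover have "(\<lambda>x. - a + x) ` (S - {a}) \<subseteq> span B" using B(2) by blast
  ultimately have "card ((\<lambda>x. - a + x) ` (S - {a})) \<le> n"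
    using independent_span_bound B(3) by metis
  moreover have "card ((\<lambda>x. - a + x) ` (S - {a})) = card S - 1"
    using \<open>a \<in> S\<close> assms(3) by (simp add: card_image)
  ultimately show False using assms(4) by linarith
qed

lemma ex_pos_if_sum_eq_0:
  fixes w :: "'a \<Rightarrow> real"
  assumes "finite S" "sum w S = 0" "v \<in> S" "w v \<noteq> 0"
  shows "\<exists>x\<in>S. 0 < w x"
proof (rule ccontr)
  assume "\<not> ?thesis"
  then have "\<forall>x\<in>S. 0 \<le> - w x" by (auto simp: not_less)
  then have "\<forall>x\<in>S. - w x = 0"
    using assms(2) sum_nonneg_eq_0_iff[OF assms(1), of "\<lambda>x. - w x"] by (simp add: sum_negf)
  then show False using assms(3,4) by simp
qed

lemma min_ratio_shift:
  fixes u w :: "'a \<Rightarrow> real"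
  assumes "finite S" "\<forall>x\<in>S. 0 \<le> u x" "\<exists>x\<in>S. 0 < w x"
  obtains t a where "a \<in> S" "u a - t * w a = 0" "\<forall>x\<in>S. 0 \<le> u x - t * w x"
proof -
  define P where "P = {x \<in> S. 0 < w x}"
  define t where "t = Min ((\<lambda>x. u x / w x) ` P)"
  have "finite P" "P \<noteq> {}" using assms by (auto simp: P_def)
  then have "t \<in> (\<lambda>x. u x / w x) ` P"
    unfolding t_def by (intro Min_in) auto
  then obtain a where a: "a \<in> P" "t = u a / w a" by blast
  have "0 \<le> t" using a assms(2) by (simp add: P_def)
  have "0 \<le> u x - t * w x" if "x \<in> S" for x
  proof (cases "0 < w x")
    case True
    then have "t \<le> u x / w x" using that \<open>finite P\<close> by (auto simp: t_def P_def)
    then show ?thesis using True by (simp add: field_simps)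
  next
    case False
    then have "t * w x \<le> 0" using \<open>0 \<le> t\<close> by (simp add: mult_nonneg_nonpos)
    moreover have "0 \<le> u x" using that assms(2) by blast
    ultimately show ?thesis by simp
  qed
  moreover have "a \<in> S" "u a - t * w a = 0" using a by (auto simp: P_def)
  ultimately show ?thesis using that by blast
qed

lemma convex_hull_remove_point:
  fixes S :: "'a::real_vector set"
  assumes "finite S" "affine_dependent S" "y \<in> convex hull S"
  obtains a where "a \<in> S" "y \<in> convex hull (S - {a})"
proof -
  obtain u where u: "\<forall>x\<in>S. 0 \<le> u x" "sum u S = 1" "(\<Sum>x\<in>S. u x *\<^sub>R x) = y"
    using assms(3) by (auto simp: convex_hull_finite[OF assms(1)])
  obtain w v where w: "sum w S = 0" "v \<in> S" "w v \<noteq> 0" "(\<Sum>x\<in>S. w x *\<^sub>R x) = 0"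
    using affine_dependent_explicit_finite[OF assms(1)] assms(2) by blast
  \<comment> \<open>move the weights \<open>u\<close> along the affine dependence \<open>w\<close> until the first one vanishes\<close>
  obtain t a where a: "a \<in> S" "u a - t * w a = 0" and nonneg: "\<forall>x\<in>S. 0 \<le> u x - t * w x"
    using min_ratio_shift[OF assms(1) u(1) ex_pos_if_sum_eq_0[OF assms(1) w(1-3)]] by blast
  have "(\<Sum>x\<in>S - {a}. u x - t * w x) = 1"
    using u(2) w(1) a assms(1) by (simp add: sum_diff1 sum_subtractf flip: sum_distrib_left)
  moreover have "(\<Sum>x\<in>S - {a}. (u x - t * w x) *\<^sub>R x) = y"
    using u(3) w(4) a assms(1)
    by (simp add: sum_diff1 scaleR_diff_left sum_subtractf flip: scaleR_scaleR scaleR_sum_right)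
  ultimately have "y \<in> convex hull (S - {a})"
    using nonneg assms(1) by (auto simp: convex_hull_finite intro!: exI[of _ "\<lambda>x. u x - t * w x"])
  with a(1) show ?thesis by (rule that)
qed

lemma caratheodory_dim:
  fixes p :: "'a::real_vector set"
  assumes "dim (UNIV :: 'a set) = n" "n \<ge> 1" "y \<in> convex hull p"
  obtains S where "finite S" "S \<subseteq> p" "card S \<le> n + 1" "y \<in> convex hull S"
proof -
  let ?P = "\<lambda>S. finite S \<and> S \<subseteq> p \<and> y \<in> convex hull S"
  obtain S0 u where "finite S0" "S0 \<subseteq> p" "\<forall>x\<in>S0. 0 \<le> u x" "sum u S0 = 1"
    "(\<Sum>v\<in>S0. u v *\<^sub>R v) = y"
    using assms(3) unfolding convex_hull_explicit by blast
  then have "?P S0" by (auto simp: convex_hull_finite)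
  then obtain S where S: "?P S" and min: "\<And>T. ?P T \<Longrightarrow> card S \<le> card T"
    using ex_has_least_nat[of ?P S0 card] by blast
  have "card S \<le> n + 1"
  proof (rule ccontr)
    assume "\<not> card S \<le> n + 1"
    then have "affine_dependent S"
      using affine_dependent_card_gt_dim[OF assms(1,2)] S by simp
    then obtain a where "a \<in> S" "y \<in> convex hull (S - {a})"
      using convex_hull_remove_point S by blast
    then have "card S \<le> card (S - {a})" using S by (intro min) auto
    then show False using \<open>a \<in> S\<close> S card_Diff1_less[of S a] by simp
  qed
  with S show ?thesis by (intro that) auto
qed

lemma convex_hull_std_simplex_combination:
  fixes p :: "'a::real_vector set"
  assumes "dim (UNIV :: 'a set) = n" "n \<ge> 1" "y \<in> convex hull p"
  obtains c a where "c \<in> std_simplex n" "\<And>i. i \<le> n \<Longrightarrow> a i \<in> p" "y = (\<Sum>i\<le>n. c i *\<^sub>R a i)"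
proof -
  obtain S where S: "finite S" "S \<subseteq> p" "card S \<le> n + 1" "y \<in> convex hull S"
    using caratheodory_dim[OF assms] .
  obtain u where u: "\<forall>x\<in>S. 0 \<le> u x" "sum u S = 1" "(\<Sum>x\<in>S. u x *\<^sub>R x) = y"
    using S(4) by (auto simp: convex_hull_finite[OF S(1)])
  obtain g where g: "bij_betw g {..<card S} S"
    using ex_bij_betw_nat_finite[OF S(1)] by (auto simp: atLeast0LessThan)
  have "S \<noteq> {}" using u(2) by auto
  then obtain s0 where "s0 \<in> S" by blast
  \<comment> \<open>indices beyond \<open>card S\<close> get weight zero and an arbitrary point of \<open>S\<close>\<close>
  define a where "a i = (if i < card S then g i else s0)" for i
  define c where "c i = (if i < card S then u (g i) else 0)" for i
  have sub: "{..<card S} \<subseteq> {..n}" using S(3) by auto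
  have "(\<Sum>i\<le>n. c i) = (\<Sum>i<card S. u (g i))"
    using sub unfolding c_def by (intro sum.mono_neutral_cong_right) auto
  also have "\<dots> = 1" using sum.reindex_bij_betw[OF g, of u] u(2) by simp
  finally have c: "c \<in> std_simplex n"
    using u(1) g S(3) by (auto simp: c_def std_simplex_def bij_betw_def)
  have a: "a i \<in> p" if "i \<le> n" for i
    using g \<open>s0 \<in> S\<close> S(2) by (auto simp: a_def bij_betw_def)
  have "(\<Sum>i\<le>n. c i *\<^sub>R a i) = (\<Sum>i<card S. u (g i) *\<^sub>R g i)"
    using sub unfolding c_def a_def by (intro sum.mono_neutral_cong_right) auto
  then have "(\<Sum>i\<le>n. c i *\<^sub>R a i) = y"
    using sum.reindex_bij_betw[OF g, of "\<lambda>x. u x *\<^sub>R x"] u(3) by simp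
  with c a show ?thesis by (intro that) auto
qed

section \<open>The upper bound\<close>

lemma infdist_convex_combination_le:
  fixes A :: "'a::real_normed_vector set"
  assumes "A \<noteq> {}" "t \<in> {0..1}" "\<And>z. z \<in> mix t A \<Longrightarrow> infdist z A \<le> D"
  shows "infdist (t *\<^sub>R p + (1 - t) *\<^sub>R q) A \<le> t * infdist p A + (1 - t) * infdist q A + D"
proof (rule field_le_epsilon)
  fix e :: real assume "0 < e"
  obtain \<alpha> \<beta> where "\<alpha> \<in> A" "\<beta> \<in> A"
    and \<alpha>: "dist p \<alpha> < infdist p A + e" and \<beta>: "dist q \<beta> < infdist q A + e"
    using infdist_less_imp_ex[OF \<open>A \<noteq> {}\<close>, of p "infdist p A + e"]
      infdist_less_imp_ex[OF \<open>A \<noteq> {}\<close>, of q "infdist q A + e"] \<open>0 < e\<close> by auto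
  have "0 \<le> t" "0 \<le> 1 - t" using assms(2) by auto
  have "dist (t *\<^sub>R p + (1 - t) *\<^sub>R q) (t *\<^sub>R \<alpha> + (1 - t) *\<^sub>R \<beta>)
      = norm (t *\<^sub>R (p - \<alpha>) + (1 - t) *\<^sub>R (q - \<beta>))"
    by (simp add: dist_norm algebra_simps)
  also have "\<dots> \<le> t * dist p \<alpha> + (1 - t) * dist q \<beta>"
    using norm_triangle_ineq[of "t *\<^sub>R (p - \<alpha>)" "(1 - t) *\<^sub>R (q - \<beta>)"] \<open>0 \<le> t\<close> \<open>0 \<le> 1 - t\<close>
    by (simp add: dist_norm)
  also have "\<dots> \<le> t * (infdist p A + e) + (1 - t) * (infdist q A + e)"
    using \<alpha> \<beta> \<open>0 \<le> t\<close> \<open>0 \<le> 1 - t\<close> by (intro add_mono mult_left_mono) auto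
  finally have close: "dist (t *\<^sub>R p + (1 - t) *\<^sub>R q) (t *\<^sub>R \<alpha> + (1 - t) *\<^sub>R \<beta>)
      \<le> t * infdist p A + (1 - t) * infdist q A + e"
    by (simp add: algebra_simps)
  have "t *\<^sub>R \<alpha> + (1 - t) *\<^sub>R \<beta> \<in> mix t A"
    using \<open>\<alpha> \<in> A\<close> \<open>\<beta> \<in> A\<close> by (auto simp: mix_def)
  then have "infdist (t *\<^sub>R \<alpha> + (1 - t) *\<^sub>R \<beta>) A \<le> D" by (rule assms(3))
  then show "infdist (t *\<^sub>R p + (1 - t) *\<^sub>R q) A \<le> t * infdist p A + (1 - t) * infdist q A + D + e"
    using infdist_triangle[of "t *\<^sub>R p + (1 - t) *\<^sub>R q" A "t *\<^sub>R \<alpha> + (1 - t) *\<^sub>R \<beta>"] close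
    by (simp add: dist_commute)
qed

lemma approx_convex_on_infdist_combination:
  fixes A :: "'a::real_normed_vector set" and a :: "nat \<Rightarrow> 'a"
  assumes "A \<noteq> {}" "0 < D" "\<And>t z. t \<in> {0..1} \<Longrightarrow> z \<in> mix t A \<Longrightarrow> infdist z A \<le> D"
  shows "approx_convex_on K (\<lambda>x. infdist (\<Sum>i\<le>n. x i *\<^sub>R a i) A / D)"
  unfolding approx_convex_on_def
proof (intro ballI)
  fix x y t assume "t \<in> {0..(1::real)}"
  have "(\<Sum>i\<le>n. (t * x i + (1 - t) * y i) *\<^sub>R a i)
      = t *\<^sub>R (\<Sum>i\<le>n. x i *\<^sub>R a i) + (1 - t) *\<^sub>R (\<Sum>i\<le>n. y i *\<^sub>R a i)"
    by (simp add: scaleR_add_left sum.distrib scaleR_sum_right)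
  then have "infdist (\<Sum>i\<le>n. (t * x i + (1 - t) * y i) *\<^sub>R a i) A
      \<le> t * infdist (\<Sum>i\<le>n. x i *\<^sub>R a i) A + (1 - t) * infdist (\<Sum>i\<le>n. y i *\<^sub>R a i) A + D"
    using infdist_convex_combination_le[OF assms(1) \<open>t \<in> {0..1}\<close> assms(3)[OF \<open>t \<in> {0..1}\<close>]]
    by simp
  then show "infdist (\<Sum>i\<le>n. (t * x i + (1 - t) * y i) *\<^sub>R a i) A / D
      \<le> t * (infdist (\<Sum>i\<le>n. x i *\<^sub>R a i) A / D) + (1 - t) * (infdist (\<Sum>i\<le>n. y i *\<^sub>R a i) A / D) + 1"
    using \<open>0 < D\<close> by (simp add: field_simps)
qed

lemma infdist_convex_hull_le_kappa:
  fixes A :: "'a::real_normed_vector set"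
  assumes "dim (UNIV :: 'a set) = n" "n \<ge> 1" "A \<noteq> {}" "0 < D"
    and "\<And>t z. t \<in> {0..1} \<Longrightarrow> z \<in> mix t A \<Longrightarrow> infdist z A \<le> D"
    and "y \<in> convex hull A"
  shows "ereal (infdist y A / D) \<le> kappa n"
proof -
  obtain c a where c: "c \<in> std_simplex n" and a: "\<And>i. i \<le> n \<Longrightarrow> a i \<in> A"
    and y: "y = (\<Sum>i\<le>n. c i *\<^sub>R a i)"
    using convex_hull_std_simplex_combination[OF assms(1,2,6)] by blast
  define f where "f x = infdist (\<Sum>i\<le>n. x i *\<^sub>R a i) A / D" for x
  have "approx_convex_on (std_simplex n) f"
    unfolding f_def using assms(3-5) by (rule approx_convex_on_infdist_combination)
  moreover have "f (vertex j) \<le> 0" if "j \<le> n" for j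
    using a[OF that] that by (simp add: f_def sum_vertex_scaleR)
  ultimately have "ereal (f c) \<le> kappa n"
    unfolding kappa_def using c by (intro Sup_upper) blast
  then show ?thesis by (simp add: f_def y)
qed

lemma hull_const_ok_kappa:
  assumes "dim (UNIV :: 'a::real_normed_vector set) = n" "n \<ge> 1" "kappa n = ereal k"
  shows "hull_const_ok TYPE('a) k"
proof (rule hull_const_okI)
  show "0 < k" using kappa_ge_1[OF assms(2)] assms(3) by (simp add: one_ereal_def)
  fix A :: "'a set" and d y
  assume A: "A \<noteq> {}" "mix_dist A = ereal d" and y: "y \<in> convex hull A"
  have "infdist y A / k \<le> d"
  proof (rule dense_ge)
    fix D assume "d < D"
    moreover have "0 \<le> d" using mix_dist_nonneg[OF A(1)] A(2) by simp
    moreover have "infdist z A \<le> D" if "t \<in> {0..1}" "z \<in> mix t A" for t z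
      using infdist_le_mix_dist[OF that] A(2) \<open>d < D\<close> by simp
    ultimately have "infdist y A / D \<le> k"
      using infdist_convex_hull_le_kappa[OF assms(1,2) A(1) _ _ y] assms(3) by simp
    then show "infdist y A / k \<le> D"
      using \<open>0 < k\<close> \<open>d < D\<close> \<open>0 \<le> d\<close> by (simp add: field_simps)
  qed
  then show "infdist y A \<le> k * d"
    using \<open>0 < k\<close> by (simp add: field_simps)
qed

section \<open>Entropy\<close>

definition entropy :: "nat \<Rightarrow> (nat \<Rightarrow> real) \<Rightarrow> real" where
  "entropy n x = (\<Sum>i\<le>n. - (x i * log 2 (x i)))"

lemma neg_mult_ln_le:
  fixes s :: real
  assumes "0 \<le> s"
  shows "- (s * ln s) \<le> s * ln 2 + 1/2 - s"
proof (cases "s = 0")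
  case False
  then have "0 < s" using assms by simp
  have "ln (1 / (2 * s)) \<le> 1 / (2 * s) - 1"
    using \<open>0 < s\<close> by (intro ln_le_minus_one) simp
  then have "s * (- ln s - ln 2) \<le> s * (1 / (2 * s) - 1)"
    using \<open>0 < s\<close> by (simp add: ln_div ln_mult)
  then show ?thesis
    using \<open>0 < s\<close> by (simp add: algebra_simps)
qed simp

lemma binary_entropy_le_1:
  fixes t :: real
  assumes "0 \<le> t" "t \<le> 1"
  shows "- (t * log 2 t) - (1 - t) * log 2 (1 - t) \<le> 1"
proof -
  have "- (t * ln t) - (1 - t) * ln (1 - t) \<le> ln 2"
  proof -
    have "t * ln 2 + (1 - t) * ln 2 = ln 2" by (simp add: algebra_simps)
    then show ?thesis using neg_mult_ln_le[of t] neg_mult_ln_le[of "1 - t"] assms by linarith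
  qed
  then show ?thesis by (simp add: log_def field_simps)
qed

lemma neg_mult_log_add_le:
  fixes a b :: real
  assumes "0 \<le> a" "0 \<le> b"
  shows "- ((a + b) * log 2 (a + b)) \<le> - (a * log 2 a) - b * log 2 b"
proof (cases "a = 0 \<or> b = 0")
  case False
  then have "0 < a" "0 < b" using assms by auto
  then have "a * log 2 a + b * log 2 b \<le> a * log 2 (a + b) + b * log 2 (a + b)"
    by (intro add_mono mult_left_mono) auto
  then show ?thesis by (simp add: algebra_simps)
qed auto

lemma neg_mult_log_mult:
  fixes t x :: real
  assumes "0 \<le> t" "0 \<le> x"
  shows "- ((t * x) * log 2 (t * x)) = t * - (x * log 2 x) + x * - (t * log 2 t)"
proof (cases "t = 0 \<or> x = 0")
  case False
  then have "0 < t" "0 < x" using assms by auto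
  then show ?thesis by (simp add: log_mult algebra_simps)
qed auto

lemma approx_convex_on_entropy: "approx_convex_on (std_simplex n) (entropy n)"
  unfolding approx_convex_on_def
proof (intro ballI)
  fix x y t assume x: "x \<in> std_simplex n" and y: "y \<in> std_simplex n" and "t \<in> {0..(1::real)}"
  then have t: "0 \<le> t" "0 \<le> 1 - t" by auto
  have nonneg: "0 \<le> x i" "0 \<le> y i" for i using x y by (auto simp: std_simplex_def)
  have sums: "(\<Sum>i\<le>n. x i) = 1" "(\<Sum>i\<le>n. y i) = 1" using x y by (auto simp: std_simplex_def)
  have "entropy n (\<lambda>i. t * x i + (1 - t) * y i)
      \<le> (\<Sum>i\<le>n. - ((t * x i) * log 2 (t * x i)) - ((1 - t) * y i) * log 2 ((1 - t) * y i))"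
    unfolding entropy_def using t nonneg by (intro sum_mono neg_mult_log_add_le) auto
  also have "\<dots> = (\<Sum>i\<le>n. t * - (x i * log 2 (x i)) + x i * - (t * log 2 t)
      + ((1 - t) * - (y i * log 2 (y i)) + y i * - ((1 - t) * log 2 (1 - t))))"
    using t nonneg by (intro sum.cong refl) (simp add: neg_mult_log_mult)
  also have "\<dots> = t * entropy n x + (\<Sum>i\<le>n. x i) * - (t * log 2 t)
      + ((1 - t) * entropy n y + (\<Sum>i\<le>n. y i) * - ((1 - t) * log 2 (1 - t)))"
    unfolding entropy_def
    by (simp add: sum.distrib sum_distrib_left sum_distrib_right sum_subtractf sum_negf)
  also have "\<dots> = t * entropy n x + (1 - t) * entropy n y
      + (- (t * log 2 t) - (1 - t) * log 2 (1 - t))"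
    using sums by simp
  also have "\<dots> \<le> t * entropy n x + (1 - t) * entropy n y + 1"
    using binary_entropy_le_1[of t] t by simp
  finally show "entropy n (\<lambda>i. t * x i + (1 - t) * y i) \<le> t * entropy n x + (1 - t) * entropy n y + 1" .
qed

lemma neg_log_le_entropy:
  assumes "x \<in> std_simplex n" "\<And>i. i \<le> n \<Longrightarrow> x i \<le> M"
  shows "- log 2 M \<le> entropy n x"
proof -
  have "- (x i * log 2 M) \<le> - (x i * log 2 (x i))" if "i \<le> n" for i
  proof (cases "x i = 0")
    case False
    then have "0 < x i" using assms(1) by (simp add: std_simplex_def order_less_le)
    then show ?thesis using assms(2)[OF that] by (simp add: mult_left_mono)
  qed simp
  then have "(\<Sum>i\<le>n. - (x i * log 2 M)) \<le> entropy n x"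
    unfolding entropy_def by (intro sum_mono) auto
  moreover have "(\<Sum>i\<le>n. - (x i * log 2 M)) = - log 2 M"
    using assms(1) by (simp add: std_simplex_def sum_negf flip: sum_distrib_right)
  ultimately show ?thesis by simp
qed

lemma entropy_nonneg:
  assumes "x \<in> std_simplex n"
  shows "0 \<le> entropy n x"
proof -
  have "x i \<le> 1" if "i \<le> n" for i
    using assms member_le_sum[of i "{..n}" x] that by (auto simp: std_simplex_def)
  then show ?thesis using neg_log_le_entropy[OF assms, of 1] by simp
qed

lemma entropy_vertex: "entropy n (vertex j) = 0"
  unfolding entropy_def vertex_def by (intro sum.neutral) auto

lemma entropy_ge_near_uniform:
  fixes b :: "nat \<Rightarrow> 'a::real_normed_vector"
  assumes "0 < \<mu>" "\<And>c j. j \<in> {1..m} \<Longrightarrow> \<bar>c j\<bar> * \<mu> \<le> norm (\<Sum>i\<in>{1..m}. c i *\<^sub>R b i)"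
    and "x \<in> std_simplex m" "0 \<le> \<delta>"
    and "norm (\<Sum>i\<in>{1..m}. (1 / (real m + 1) - x i) *\<^sub>R b i) \<le> \<mu> * \<delta>"
  shows "- log 2 (1 / (real m + 1) + (real m + 1) * \<delta>) \<le> entropy m x"
proof (rule neg_log_le_entropy[OF assms(3)])
  have close: "x j \<ge> 1 / (real m + 1) - \<delta> \<and> x j \<le> 1 / (real m + 1) + \<delta>" if "j \<in> {1..m}" for j
  proof -
    have "\<bar>1 / (real m + 1) - x j\<bar> * \<mu> \<le> \<delta> * \<mu>"
      using order_trans[OF assms(2)[OF that, of "\<lambda>i. 1 / (real m + 1) - x i"] assms(5)]
      by (simp add: mult.commute)
    then show ?thesis using \<open>0 < \<mu>\<close> by (simp add: abs_le_iff)
  qed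
  fix i assume "i \<le> m"
  show "x i \<le> 1 / (real m + 1) + (real m + 1) * \<delta>"
  proof (cases "i = 0")
    case True
    \<comment> \<open>no coefficient bound involves \<open>x 0\<close>; it is controlled through \<open>\<Sum>x = 1\<close>\<close>
    have "1 = x 0 + (\<Sum>j\<in>{1..m}. x j)"
      using assms(3) by (simp add: std_simplex_def atMost_atLeast0 sum.atLeast_Suc_atMost)
    moreover have "(\<Sum>j\<in>{1..m}. 1 / (real m + 1) - \<delta>) \<le> (\<Sum>j\<in>{1..m}. x j)"
      using close by (intro sum_mono) auto
    ultimately have "x 0 \<le> 1 - m * (1 / (real m + 1) - \<delta>)" by simp
    also have "\<dots> \<le> 1 / (real m + 1) + (real m + 1) * \<delta>"
      using \<open>0 \<le> \<delta>\<close> by (simp add: field_simps)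
    finally show ?thesis using True by simp
  next
    case False
    then have "x i \<le> 1 / (real m + 1) + \<delta>" using close[of i] \<open>i \<le> m\<close> by simp
    also have "\<dots> \<le> 1 / (real m + 1) + (real m + 1) * \<delta>"
      using \<open>0 \<le> \<delta>\<close> by (simp add: distrib_right)
    finally show ?thesis .
  qed
qed

section \<open>The lower bound\<close>

definition epigraph_image ::
    "nat \<Rightarrow> ((nat \<Rightarrow> real) \<Rightarrow> real) \<Rightarrow> (nat \<Rightarrow> 'a) \<Rightarrow> 'a \<Rightarrow> 'a::real_vector set" where
  "epigraph_image m g v u = {(\<Sum>i\<le>m. x i *\<^sub>R v i) + s *\<^sub>R u | x s. x \<in> std_simplex m \<and> g x \<le> s}"

lemma vertex_in_epigraph_image:
  assumes "j \<le> m" "g (vertex j) \<le> 0"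
  shows "v j \<in> epigraph_image m g v u"
proof -
  have "v j = (\<Sum>i\<le>m. vertex j i *\<^sub>R v i) + 0 *\<^sub>R u"
    using assms(1) by (simp add: sum_vertex_scaleR)
  then show ?thesis
    unfolding epigraph_image_def using vertex_in_std_simplex[OF assms(1)] assms(2) by blast
qed

lemma mix_dist_epigraph_image_le:
  fixes v :: "nat \<Rightarrow> 'a::real_normed_vector"
  assumes g: "approx_convex_on (std_simplex m) g"
  shows "mix_dist (epigraph_image m g v u) \<le> ereal (norm u)"
proof (rule mix_dist_le)
  define A where "A = epigraph_image m g v u"
  fix t z assume t: "t \<in> {0..1}" and "z \<in> mix t A"
  define P where "P x = (\<Sum>i\<le>m. x i *\<^sub>R v i)" for x
  obtain x s y r where x: "x \<in> std_simplex m" "g x \<le> s" and y: "y \<in> std_simplex m" "g y \<le> r"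
    and z: "z = t *\<^sub>R (P x + s *\<^sub>R u) + (1 - t) *\<^sub>R (P y + r *\<^sub>R u)"
    using \<open>z \<in> mix t A\<close> unfolding mix_def A_def epigraph_image_def P_def by blast
  define x' where "x' = (\<lambda>i. t * x i + (1 - t) * y i)"
  define \<sigma> where "\<sigma> = t * s + (1 - t) * r"
  have "P x' = t *\<^sub>R P x + (1 - t) *\<^sub>R P y"
    unfolding P_def x'_def by (simp add: scaleR_add_left sum.distrib scaleR_sum_right)
  then have "z = P x' + \<sigma> *\<^sub>R u"
    unfolding z \<sigma>_def by (simp add: algebra_simps)
  have "g x' \<le> t * g x + (1 - t) * g y + 1"
    using g x(1) y(1) t unfolding approx_convex_on_def x'_def by blast
  also have "\<dots> \<le> \<sigma> + 1"
    unfolding \<sigma>_def using x(2) y(2) t by (intro add_mono mult_left_mono) auto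
  finally have "g x' \<le> \<sigma> + 1" .
  \<comment> \<open>lifting \<open>z\<close> by at most one unit of \<open>u\<close> lands in \<open>A\<close>\<close>
  have "P x' + max \<sigma> (g x') *\<^sub>R u \<in> A"
    unfolding A_def epigraph_image_def P_def using std_simplex_combination[OF x(1) y(1) t] x'_def by fastforce
  then have "infdist z A \<le> dist z (P x' + max \<sigma> (g x') *\<^sub>R u)"
    by (rule infdist_le)
  also have "\<dots> = (max \<sigma> (g x') - \<sigma>) * norm u"
    unfolding \<open>z = P x' + \<sigma> *\<^sub>R u\<close> dist_norm
    by (simp add: norm_minus_commute flip: scaleR_diff_left)
  also have "\<dots> \<le> norm u"
    using \<open>g x' \<le> \<sigma> + 1\<close> by (intro mult_left_le_one_le) auto
  finally show "infdist z A \<le> norm u" .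
qed simp

lemma dist_ge_height:
  fixes w u y p :: "'a::real_normed_vector"
  assumes "u - w \<in> span F" "y - p \<in> span F" "0 \<le> s"
    and "s < \<theta> \<Longrightarrow> \<theta> * (infdist w (span F) + norm u) \<le> norm (y - p)"
  shows "\<theta> * infdist w (span F) \<le> dist y (p + s *\<^sub>R u)"
proof -
  define d where "d = infdist w (span F)"
  have "(y - (p + s *\<^sub>R u)) - (- s) *\<^sub>R w = (y - p) - s *\<^sub>R (u - w)"
    by (simp add: algebra_simps)
  also have "\<dots> \<in> span F" using assms(1,2) by (simp add: span_diff span_scale)
  finally have "s * d \<le> norm (y - (p + s *\<^sub>R u))"
    using abs_mult_infdist_span_le_norm \<open>0 \<le> s\<close> unfolding d_def by fastforce
  show ?thesis
  proof (cases "\<theta> \<le> s")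
    case True
    then have "\<theta> * d \<le> s * d" by (simp add: d_def mult_right_mono infdist_nonneg)
    then show ?thesis using \<open>s * d \<le> _\<close> by (simp add: d_def dist_norm)
  next
    case False
    then have "\<theta> * (d + norm u) \<le> norm (y - p)" using assms(4) by (simp add: d_def)
    also have "\<dots> \<le> norm (y - (p + s *\<^sub>R u)) + s * norm u"
      using norm_triangle_ineq[of "y - (p + s *\<^sub>R u)" "s *\<^sub>R u"] \<open>0 \<le> s\<close> by simp
    also have "\<dots> \<le> norm (y - (p + s *\<^sub>R u)) + \<theta> * norm u"
      using False by (simp add: mult_right_mono)
    finally show ?thesis by (simp add: d_def dist_norm algebra_simps)
  qed
qed

lemma infdist_epigraph_image_ge:
  fixes v :: "nat \<Rightarrow> 'a::real_normed_vector"
  assumes g_nonneg: "\<And>x. x \<in> std_simplex m \<Longrightarrow> 0 \<le> g x"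
    and span: "u - w \<in> span F" "\<And>i. i \<le> m \<Longrightarrow> v i \<in> span F" "y \<in> span F"
    and far: "\<And>x. x \<in> std_simplex m \<Longrightarrow> g x < \<theta>
      \<Longrightarrow> \<theta> * (infdist w (span F) + norm u) \<le> norm (y - (\<Sum>i\<le>m. x i *\<^sub>R v i))"
  shows "\<theta> * infdist w (span F) \<le> infdist y (epigraph_image m g v u)"
proof -
  define A where "A = epigraph_image m g v u"
  have "A \<noteq> {}"
    unfolding A_def epigraph_image_def using vertex_in_std_simplex[of 0 m] by blast
  have "\<theta> * infdist w (span F) \<le> dist y a" if "a \<in> A" for a
  proof -
    obtain x s where x: "x \<in> std_simplex m" "g x \<le> s"
      and a: "a = (\<Sum>i\<le>m. x i *\<^sub>R v i) + s *\<^sub>R u"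
      using \<open>a \<in> A\<close> unfolding A_def epigraph_image_def by blast
    have "(\<Sum>i\<le>m. x i *\<^sub>R v i) \<in> span F"
      by (intro span_sum span_scale span(2)) auto
    then have "y - (\<Sum>i\<le>m. x i *\<^sub>R v i) \<in> span F"
      using span(3) by (rule span_diff[rotated])
    then show ?thesis
      unfolding a using g_nonneg[OF x(1)] x(2) far[OF x(1)]
      by (intro dist_ge_height[OF span(1)]) auto
  qed
  then show ?thesis
    using \<open>A \<noteq> {}\<close> by (simp add: A_def infdist_notempty cINF_greatest)
qed

lemma hull_const_epigraph_image_bound:
  fixes v :: "nat \<Rightarrow> 'a::real_normed_vector"
  assumes ok: "hull_const_ok TYPE('a) C" "0 \<le> C"
    and g: "approx_convex_on (std_simplex m) g" "\<And>x. x \<in> std_simplex m \<Longrightarrow> 0 \<le> g x"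
      "\<And>j. j \<le> m \<Longrightarrow> g (vertex j) = 0"
    and span: "u - w \<in> span F" "\<And>i. i \<le> m \<Longrightarrow> v i \<in> span F"
    and far: "\<And>x. x \<in> std_simplex m \<Longrightarrow> g x < \<theta> \<Longrightarrow> \<theta> * (infdist w (span F) + norm u)
      \<le> norm ((\<Sum>i\<le>m. (1 / (real m + 1)) *\<^sub>R v i) - (\<Sum>i\<le>m. x i *\<^sub>R v i))"
  shows "\<theta> * infdist w (span F) \<le> C * norm u"
proof -
  define A where "A = epigraph_image m g v u"
  define y where "y = (\<Sum>i\<le>m. (1 / (real m + 1)) *\<^sub>R v i)"
  have vertex_in_A: "v j \<in> A" if "j \<le> m" for j
    unfolding A_def using that g(3)[OF that] by (intro vertex_in_epigraph_image) auto
  then have "A \<noteq> {}" by blast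
  have "y \<in> convex hull A"
    unfolding y_def using vertex_in_A by (intro convex_sum) (auto intro: hull_inc)
  moreover have "mix_dist A \<le> ereal (norm u)"
    unfolding A_def using g(1) by (rule mix_dist_epigraph_image_le)
  ultimately have "infdist y A \<le> C * norm u"
    using infdist_convex_hull_le[OF ok \<open>A \<noteq> {}\<close>] by blast
  moreover have "\<theta> * infdist w (span F) \<le> infdist y A"
    unfolding A_def
  proof (rule infdist_epigraph_image_ge[OF g(2) span])
    show "y \<in> span F"
      unfolding y_def by (intro span_sum span_scale span(2)) auto
  qed (use far y_def in auto)
  ultimately show ?thesis by linarith
qed

lemma entropy_lt_imp_far_from_barycentre:
  fixes b :: "nat \<Rightarrow> 'a::real_normed_vector"
  assumes "0 < \<mu>" "\<And>c j. j \<in> {1..m} \<Longrightarrow> \<bar>c j\<bar> * \<mu> \<le> norm (\<Sum>i\<in>{1..m}. c i *\<^sub>R b i)"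
    and "x \<in> std_simplex m" "0 < \<epsilon>" "entropy m x < log 2 (real m + 1) - \<epsilon>"
  shows "\<mu> * ((2 powr \<epsilon> - 1) / (real m + 1)\<^sup>2)
    < norm (\<Sum>i\<in>{1..m}. (1 / (real m + 1) - x i) *\<^sub>R b i)"
proof (rule ccontr)
  define \<delta> where "\<delta> = (2 powr \<epsilon> - 1) / (real m + 1)\<^sup>2"
  have "0 < \<delta>" using \<open>0 < \<epsilon>\<close> by (simp add: \<delta>_def)
  have "(real m + 1) * \<delta> = (2 powr \<epsilon> - 1) / (real m + 1)"
    by (simp add: \<delta>_def power2_eq_square)
  then have "1 / (real m + 1) + (real m + 1) * \<delta> = 2 powr \<epsilon> / (real m + 1)"
    by (simp flip: add_divide_distrib)
  then have "- log 2 (1 / (real m + 1) + (real m + 1) * \<delta>) = log 2 (real m + 1) - \<epsilon>"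
    by (simp add: log_divide)
  moreover assume "\<not> ?thesis"
  ultimately have "log 2 (real m + 1) - \<epsilon> \<le> entropy m x"
    using entropy_ge_near_uniform[OF assms(1-3) less_imp_le[OF \<open>0 < \<delta>\<close>]] by (simp add: \<delta>_def)
  then show False using assms(5) by simp
qed

lemma hull_const_entropy_bound:
  fixes b :: "nat \<Rightarrow> 'a::real_normed_vector"
  assumes ok: "hull_const_ok TYPE('a) C" "0 \<le> C"
    and "0 < \<mu>"
    and coeff_bound: "\<And>c j. j \<in> {1..m} \<Longrightarrow> \<bar>c j\<bar> * \<mu> \<le> norm (\<Sum>i\<in>{1..m}. c i *\<^sub>R b i)"
    and "u - w \<in> span (b ` {1..m})" "0 < \<epsilon>" "0 \<le> log 2 (real m + 1) - \<epsilon>"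
  shows "(log 2 (real m + 1) - \<epsilon>) * infdist w (span (b ` {1..m})) \<le> C * norm u"
proof -
  define \<theta> where "\<theta> = log 2 (real m + 1) - \<epsilon>"
  define \<delta> where "\<delta> = (2 powr \<epsilon> - 1) / (real m + 1)\<^sup>2"
  have "0 < \<delta>" using \<open>0 < \<epsilon>\<close> by (simp add: \<delta>_def)
  \<comment> \<open>scaled so that entropy below \<open>\<theta>\<close> forces distance \<open>\<theta> (infdist w _ + norm u)\<close> from the barycentre\<close>
  define scale where "scale = \<theta> * (infdist w (span (b ` {1..m})) + norm u) / (\<mu> * \<delta>)"
  have "0 \<le> scale"
    using assms(7) \<open>0 < \<mu>\<close> \<open>0 < \<delta>\<close> by (simp add: scale_def \<theta>_def infdist_nonneg)
  define v where "v i = (if i = 0 then 0 else scale *\<^sub>R b i)" for i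
  have "{..m} = insert 0 {1..m}" by auto
  then have v_comb: "(\<Sum>i\<le>m. x i *\<^sub>R v i) = scale *\<^sub>R (\<Sum>i\<in>{1..m}. x i *\<^sub>R b i)" for x
    by (simp add: v_def scaleR_sum_right mult.commute)
  show ?thesis
    unfolding \<theta>_def[symmetric]
  proof (rule hull_const_epigraph_image_bound[OF ok approx_convex_on_entropy entropy_nonneg entropy_vertex
        \<open>u - w \<in> span (b ` {1..m})\<close>])
    show "v i \<in> span (b ` {1..m})" if "i \<le> m" for i
      using that by (simp add: v_def span_base span_zero span_scale)
    fix x assume x: "x \<in> std_simplex m" and "entropy m x < \<theta>"
    then have "\<mu> * \<delta> < norm (\<Sum>i\<in>{1..m}. (1 / (real m + 1) - x i) *\<^sub>R b i)"
      using entropy_lt_imp_far_from_barycentre[OF \<open>0 < \<mu>\<close> coeff_bound x \<open>0 < \<epsilon>\<close>]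
      by (simp add: \<delta>_def \<theta>_def)
    then have "scale * (\<mu> * \<delta>) \<le> norm (scale *\<^sub>R (\<Sum>i\<in>{1..m}. (1 / (real m + 1) - x i) *\<^sub>R b i))"
      using \<open>0 \<le> scale\<close> by (simp add: mult_left_mono)
    then show "\<theta> * (infdist w (span (b ` {1..m})) + norm u)
        \<le> norm ((\<Sum>i\<le>m. (1 / (real m + 1)) *\<^sub>R v i) - (\<Sum>i\<le>m. x i *\<^sub>R v i))"
      using \<open>0 < \<mu>\<close> \<open>0 < \<delta>\<close>
      by (simp add: v_comb scale_def scaleR_diff_left sum_subtractf flip: scaleR_diff_right)
  qed
qed

lemma log_le_hull_const_plus_eps:
  fixes b :: "nat \<Rightarrow> 'a::real_normed_vector"
  assumes ok: "hull_const_ok TYPE('a) C" "0 \<le> C"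
    and b: "inj_on b {..m}" "independent (b ` {..m})" and "0 < \<epsilon>"
  shows "log 2 (real m + 1) - \<epsilon> \<le> C * (1 + \<epsilon>)"
proof -
  define F where "F = b ` {1..m}"
  define d where "d = infdist (b 0) (span F)"
  have "{..m} - {0} = {1..m}" by auto
  then have "b 0 \<notin> span F"
    using independent_not_in_span_rest[OF b, of 0] by (simp add: F_def)
  have "finite F" by (simp add: F_def)
  then have "0 < d" unfolding d_def using \<open>b 0 \<notin> span F\<close> by (rule infdist_span_pos)
  obtain u where u: "u - b 0 \<in> span F" "norm u < (1 + \<epsilon>) * d"
    by (rule coset_near_min_norm[OF \<open>finite F\<close> \<open>b 0 \<notin> span F\<close> \<open>0 < \<epsilon>\<close>, folded d_def])
  have "inj_on b {1..m}" using b(1) by (rule inj_on_subset) auto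
  moreover have "independent (b ` {1..m})" using b(2) by (rule independent_mono) auto
  ultimately obtain \<mu> where "0 < \<mu>"
    and coeff_bound: "\<And>c j. j \<in> {1..m} \<Longrightarrow> \<bar>c j\<bar> * \<mu> \<le> norm (\<Sum>i\<in>{1..m}. c i *\<^sub>R b i)"
    using independent_coeff_bound[OF finite_atLeastAtMost] by blast
  show ?thesis
  proof (cases "0 \<le> log 2 (real m + 1) - \<epsilon>")
    case True
    then have "(log 2 (real m + 1) - \<epsilon>) * d \<le> C * norm u"
      using hull_const_entropy_bound[OF ok \<open>0 < \<mu>\<close>] coeff_bound u(1) \<open>0 < \<epsilon>\<close>
      by (simp add: d_def F_def)
    also have "\<dots> \<le> (C * (1 + \<epsilon>)) * d"
      using u(2) ok(2) by (simp add: mult_left_mono mult.assoc)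
    finally show ?thesis using \<open>0 < d\<close> by simp
  next
    case False
    moreover have "0 \<le> C * (1 + \<epsilon>)" using ok(2) \<open>0 < \<epsilon>\<close> by simp
    ultimately show ?thesis by simp
  qed
qed

lemma ex_independent_family:
  assumes "dim (UNIV :: 'a::real_vector set) = n" "n \<ge> 1"
  obtains b where "inj_on b {..n - 1}" "independent (b ` {..n - 1} :: 'a set)"
proof -
  obtain B :: "'a set" where B: "independent B" "card B = n"
    using basis_exists[of "UNIV :: 'a set"] assms(1) by auto
  then have "finite B" using assms(2) by (metis card.infinite not_one_le_zero)
  then obtain b where "bij_betw b {0..<n} B"
    using ex_bij_betw_nat_finite B(2) by blast
  moreover have "{0..<n} = {..n - 1}" using assms(2) by auto
  ultimately show ?thesis
    using that B(1) by (auto simp: bij_betw_def)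
qed

lemma hull_const_lower_bounds:
  assumes "dim (UNIV :: 'a::real_normed_vector set) = n" "n \<ge> 1"
    and "hull_const_ok TYPE('a) C" "0 < C"
  shows "1 \<le> C" "log 2 n \<le> C"
proof -
  obtain b :: "nat \<Rightarrow> 'a" where b: "inj_on b {..n - 1}" "independent (b ` {..n - 1})"
    using ex_independent_family[OF assms(1,2)] by blast
  have "b 0 \<in> b ` {..n - 1}" by simp
  then have "b 0 \<noteq> 0" using b(2) dependent_zero by metis
  then show "1 \<le> C" using hull_const_ge_1[OF assms(3)] \<open>0 < C\<close> by simp
  have n_eq: "real (n - 1) + 1 = real n" using assms(2) by simp
  show "log 2 n \<le> C"
  proof (rule field_le_epsilon)
    fix e :: real assume "0 < e"
    define \<epsilon> where "\<epsilon> = e / (C + 1)"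
    have "0 < \<epsilon>" using \<open>0 < e\<close> \<open>0 < C\<close> by (simp add: \<epsilon>_def)
    have "log 2 n - \<epsilon> \<le> C * (1 + \<epsilon>)"
      using log_le_hull_const_plus_eps[OF assms(3) _ b \<open>0 < \<epsilon>\<close>] \<open>0 < C\<close> n_eq by simp
    moreover have "\<epsilon> * (C + 1) = e" using \<open>0 < C\<close> by (simp add: \<epsilon>_def)
    ultimately show "log 2 n \<le> C + e" by (simp add: algebra_simps)
  qed
qed

theorem theorem3p1:
  fixes n :: nat
  assumes "n \<ge> 1" and "dim (UNIV :: 'a::real_normed_vector set) = n"
  shows "\<exists>C>0. hull_const_ok TYPE('a) C
      \<and> (\<forall>C'>0. hull_const_ok TYPE('a) C' \<longrightarrow> C \<le> C')
      \<and> log 2 (real n) \<le> C \<and> ereal C \<le> kappa n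
      \<and> C \<le> real_of_int \<lceil>log 2 (real n + 1)\<rceil>
      \<and> real_of_int \<lceil>log 2 (real n + 1)\<rceil> \<le> log 2 (real n) + 1"
proof -
  obtain k where k: "kappa n = ereal k" "1 \<le> k" "k \<le> real_of_int \<lceil>log 2 (real n + 1)\<rceil>"
    using kappa_ge_1[OF assms(1)] kappa_le_ceiling_log[of n] by (cases "kappa n") auto
  define S where "S = {C. 0 < C \<and> hull_const_ok TYPE('a) C}"
  have "k \<in> S" using hull_const_ok_kappa[OF assms(2,1) k(1)] k(2) by (simp add: S_def)
  have lower: "1 \<le> C" "log 2 n \<le> C" if "C \<in> S" for C
    using hull_const_lower_bounds[OF assms(2,1)] that by (auto simp: S_def)
  then have "bdd_below S" by (meson bdd_belowI)
  show ?thesis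
  proof (intro exI[of _ "Inf S"] conjI allI impI)
    show "hull_const_ok TYPE('a) (Inf S)"
      using \<open>k \<in> S\<close> lower by (intro hull_const_ok_Inf[of S 1]) (auto simp: S_def)
    have "1 \<le> Inf S" "log 2 n \<le> Inf S"
      using \<open>k \<in> S\<close> lower by (auto intro!: cInf_greatest)
    then show "0 < Inf S" "log 2 n \<le> Inf S" by auto
    show "Inf S \<le> C'" if "0 < C'" "hull_const_ok TYPE('a) C'" for C'
      using \<open>bdd_below S\<close> that by (intro cInf_lower) (auto simp: S_def)
    have "Inf S \<le> k" using \<open>k \<in> S\<close> \<open>bdd_below S\<close> by (rule cInf_lower)
    then show "ereal (Inf S) \<le> kappa n" "Inf S \<le> real_of_int \<lceil>log 2 (real n + 1)\<rceil>"
      using k by auto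
  qed (rule ceiling_log2_Suc_le[OF assms(1)])
qed

end
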